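(* Let $A^{(n)}_k$ be Knuth's Faulhaber coefficients, defined by $$\sum_{n\ge1}\sum_{k=0}^{n-1}\frac{x^{2n}}{(2n)!}A^{(n)}_k y^{k}=\left(\frac{x\sqrt y}{2}\right)\frac{\cosh\!\left(\tfrac12 x\sqrt{y+4}\right)-\cosh\!\left(\tfrac12 x\sqrt y\right)}{\sinh\!\left(\tfrac12 x\sqrt y\right)}.$$ Then for all integers $n\ge k\ge1$, $$A^{(n+1)}_{n-k}=\frac{2(-1)^{n-k}\Gamma(2n+3)}{\Gamma(k+2)}\sum_{j=0}^{\lfloor (k-1)/2\rfloor}\frac{(-1)^{j}\Gamma(2k-2j)}{\Gamma(k-2j)\Gamma(2j+2)}\,\frac{\zeta(2n-2j)}{(2\pi)^{2n-2j}},$$ where $\zeta$ is the Riemann zeta function.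
   Context: Equivalently, with the Gessel–Viennot normalization $f(n,k)=A^{(n+1)}_{n-k}/(n+1)$, the left side equals $(n+1)f(n,k)$. *)

theory Defs
  imports "HOL-Analysis.Analysis"
begin

text \<open>Right-hand side of the generating function, for fixed y > 0, as a function of x.
  (At x = 0 the HOL value is 0, which agrees with the removable value of the expression.)\<close>
definition faulhaber_gf :: "real \<Rightarrow> real \<Rightarrow> real" where
  "faulhaber_gf y x =
     (x * sqrt y / 2) *
     ((cosh (x * sqrt (y + 4) / 2) - cosh (x * sqrt y / 2)) / sinh (x * sqrt y / 2))"

definition faulhaber_A :: "nat \<Rightarrow> nat \<Rightarrow> real" where
  "faulhaber_A = (THE c. (\<forall>n k. n \<le> k \<longrightarrow> c n k = 0) \<and>
      (\<forall>y>0. \<exists>r>0. \<forall>x. \<bar>x\<bar> < r \<longrightarrow>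
         (\<lambda>n. \<Sum>k<n. x ^ (2*n) / fact (2*n) * c n k * y ^ k) sums faulhaber_gf y x))"

text \<open>Riemann zeta function on real arguments s > 1 (only used there).\<close>
definition zeta_real :: "real \<Rightarrow> real" where
  "zeta_real s = (\<Sum>m. 1 / (real (Suc m)) powr s)"

end

(*
  Put X = x^2 and Y = y/4, and let S and C be the power series of sinh (sqrt X) / sqrt X and
  cosh (sqrt X). The generating function is (C ((Y + 1) X) - C (Y X)) / S (Y X), and Taylor's formula
  for C at Y X shows that A^(N)_K is (2N)! / ((N - K)! 4^K) times the K-th coefficient of C^(N-K) / S.

  Differentiating 4 X C'' + 2 C' = C gives a three-term recurrence for X^k C^(k+1), whence
  X^k C^(k+1) = P_k C + Q_k S with an explicit polynomial P_k and a polynomial Q_k of degree below k.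
  Dividing by S, X^k C^(k+1) / S = P_k T + Q_k with T = C / S = sqrt X coth (sqrt X), and Q_k does
  not reach the coefficient in question.

  The reflection formula for the digamma function gives
  pi z cot (pi z) = 1 - z (psi (1 + z) - psi (1 - z)) = 1 - 2 sum_q zeta (2q + 2) z^(2q + 2),
  and the substitution z^2 = -X / pi^2 turns this into T_(q+1) = 2 (-1)^q zeta (2q + 2) / pi^(2q + 2).
*)

theory Submission
  imports Defs "HOL-Complex_Analysis.Complex_Analysis"
begin

section \<open>Substitutions and derivatives of formal power series\<close>

lemma fps_compose_monom_nth:
  fixes f :: "'a::comm_ring_1 fps"
  assumes "d > 0"
  shows "fps_nth (f oo (fps_const c * fps_X ^ d)) m =
    (if d dvd m then c ^ (m div d) * fps_nth f (m div d) else 0)"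
proof -
  have "fps_nth (f oo (fps_const c * fps_X ^ d)) m = (\<Sum>i=0..m. fps_nth f i * (c ^ i * (if m = d * i then 1 else 0)))"
    by (simp add: fps_compose_nth power_mult_distrib fps_const_power flip: power_mult)
  also have "\<dots> = (\<Sum>i\<in>{0..m} \<inter> {i. m = d * i}. fps_nth f i * c ^ i)"
    by (auto simp: sum.inter_restrict intro!: sum.cong)
  also have "{0..m} \<inter> {i. m = d * i} = (if d dvd m then {m div d} else {})"
    using assms by (auto simp: dvd_def)
  finally show ?thesis by (auto simp: mult.commute)
qed

lemma fps_compose_X2_nth:
  fixes f :: "'a::comm_ring_1 fps"
  shows "fps_nth (f oo fps_X ^ 2) m = (if even m then fps_nth f (m div 2) else 0)"
  using fps_compose_monom_nth [of 2 f 1 m] by simp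

lemma fps_compose_linear_compose:
  fixes f :: "'a::idom fps"
  assumes "d > 0"
  shows "(f oo (fps_const a * fps_X)) oo (fps_const b * fps_X ^ d) = f oo (fps_const (a * b) * fps_X ^ d)"
proof -
  have "(fps_const a * fps_X) oo (fps_const b * fps_X ^ d) = fps_const (a * b) * fps_X ^ d"
    using assms by (simp add: fps_const_mult_apply_left [symmetric] mult.assoc)
  moreover have "(f oo (fps_const a * fps_X)) oo (fps_const b * fps_X ^ d)
      = f oo ((fps_const a * fps_X) oo (fps_const b * fps_X ^ d))"
    by (rule fps_compose_assoc [symmetric]) (use assms in simp_all)
  ultimately show ?thesis
    by simp
qed

declare fps_nth_deriv.simps(2) [simp del]

lemma fps_nth_deriv_nth:
  fixes f :: "'a::field_char_0 fps"
  shows "fps_nth (fps_nth_deriv i f) n = fact (n + i) / fact n * fps_nth f (n + i)"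
proof (induction i arbitrary: n)
  case (Suc i)
  have nz: "(of_nat (Suc n) :: 'a) \<noteq> 0"
    by (simp only: of_nat_eq_0_iff)
  have "fps_nth (fps_nth_deriv (Suc i) f) n = of_nat (Suc n) * fps_nth (fps_nth_deriv i f) (Suc n)"
    by (simp add: fps_nth_deriv_commute)
  also have "\<dots> = of_nat (Suc n) * (fact (Suc n + i) / (of_nat (Suc n) * fact n)) * fps_nth f (Suc n + i)"
    by (simp only: Suc fact_Suc mult.assoc)
  also have "\<dots> = fact (n + Suc i) / fact n * fps_nth f (n + Suc i)"
    using nz by simp
  finally show ?case .
qed simp

section \<open>The series of sinh and cosh at the square root\<close>

(* sinh (sqrt X) / sqrt X, cosh (sqrt X) and sqrt X * coth (sqrt X) *)
definition fps_sinhc_sqrt :: "'a::field_char_0 fps" where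
  "fps_sinhc_sqrt = Abs_fps (\<lambda>p. 1 / fact (2 * p + 1))"

definition fps_cosh_sqrt :: "'a::field_char_0 fps" where
  "fps_cosh_sqrt = Abs_fps (\<lambda>p. 1 / fact (2 * p))"

definition fps_coth_sqrt :: "'a::field_char_0 fps" where
  "fps_coth_sqrt = fps_cosh_sqrt / fps_sinhc_sqrt"

lemma fps_sinhc_sqrt_nth [simp]: "fps_nth fps_sinhc_sqrt p = 1 / fact (2 * p + 1)"
  by (simp add: fps_sinhc_sqrt_def del: fact_Suc)

lemma fps_cosh_sqrt_nth [simp]: "fps_nth fps_cosh_sqrt p = 1 / fact (2 * p)"
  by (simp add: fps_cosh_sqrt_def)

lemma fps_sinhc_sqrt_nonzero: "fps_sinhc_sqrt \<noteq> 0"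
proof -
  have "fps_nth (fps_sinhc_sqrt :: 'a fps) 0 \<noteq> 0"
    by simp
  then show ?thesis
    by (metis fps_zero_nth)
qed

lemma fps_div_sinhc_sqrt_mult: "f / fps_sinhc_sqrt * fps_sinhc_sqrt = f"
  by (simp add: fps_divide_unit mult.assoc inverse_mult_eq_1)

lemma fps_coth_sqrt_unique:
  assumes "f * fps_sinhc_sqrt = fps_cosh_sqrt"
  shows "f = fps_coth_sqrt"
  unfolding fps_coth_sqrt_def assms [symmetric]
  by (simp add: fps_sinhc_sqrt_nonzero)

lemma power_neg_square: "(- c\<^sup>2) ^ b = (-1) ^ b * (c :: 'a::comm_ring_1) ^ (2 * b)"
  by (metis mult_minus1 power_mult power_mult_distrib)

lemma fps_sin_eq_sinhc_sqrt:
  "fps_sin c = fps_const c * fps_X * (fps_sinhc_sqrt oo (fps_const (- c\<^sup>2) * fps_X ^ 2))"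
proof (rule fps_ext)
  fix m
  show "fps_nth (fps_sin c) m = fps_nth (fps_const c * fps_X * (fps_sinhc_sqrt oo (fps_const (- c\<^sup>2) * fps_X ^ 2))) m"
  proof (cases m)
    case (Suc m')
    then show ?thesis
      by (cases "even m'")
         (auto simp: fps_sin_def mult.assoc fps_compose_monom_nth power_neg_square elim!: evenE
               simp del: fact_Suc)
  qed (simp add: fps_sin_def)
qed

lemma fps_cos_eq_cosh_sqrt:
  "fps_cos c = fps_cosh_sqrt oo (fps_const (- c\<^sup>2) * fps_X ^ 2)"
  by (rule fps_ext) (auto simp: fps_cos_def fps_compose_monom_nth power_neg_square elim!: evenE)

lemma fps_deriv_cosh_sqrt: "fps_deriv fps_cosh_sqrt = fps_const (1/2) * (fps_sinhc_sqrt :: real fps)"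
  by (rule fps_ext) (simp add: divide_simps; simp add: algebra_simps)

lemma fps_cosh_sqrt_ode:
  "fps_X * fps_nth_deriv (m + 2) fps_cosh_sqrt =
     fps_const (1/4) * fps_nth_deriv m fps_cosh_sqrt
     - fps_const ((2 * real m + 1) / 2) * fps_nth_deriv (m + 1) (fps_cosh_sqrt :: real fps)"
proof (rule fps_ext)
  fix N
  show "fps_nth (fps_X * fps_nth_deriv (m + 2) fps_cosh_sqrt) N =
    fps_nth (fps_const (1/4) * fps_nth_deriv m fps_cosh_sqrt
     - fps_const ((2 * real m + 1) / 2) * fps_nth_deriv (m + 1) (fps_cosh_sqrt :: real fps)) N"
    by (cases N) (simp_all add: fps_nth_deriv_nth, simp_all add: divide_simps, simp_all add: algebra_simps)
qed

section \<open>Derivatives of cosh at the square root\<close>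

definition cosh_part_coeff :: "nat \<Rightarrow> nat \<Rightarrow> real" where
  "cosh_part_coeff j q = (-1) ^ q * fact (2*j + 2*q + 1) / (4 ^ (j + q + 1) * fact q * fact (2*j + 1))"

definition cosh_part :: "nat \<Rightarrow> real fps" where
  "cosh_part k = Abs_fps (\<lambda>j. if 2*j < k then cosh_part_coeff j (k - 2*j - 1) else 0)"

fun sinh_part :: "nat \<Rightarrow> real fps" where
  "sinh_part 0 = fps_const (1/2)"
| "sinh_part (Suc 0) = fps_const (-1/4)"
| "sinh_part (Suc (Suc k)) =
     fps_const (1/4) * (fps_X * sinh_part k) - fps_const ((2 * real k + 3) / 2) * sinh_part (Suc k)"

lemma nth_deriv_cosh_sqrt_rec:
  "fps_X ^ (k+2) * fps_nth_deriv (k+3) fps_cosh_sqrt =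
     fps_const (1/4) * (fps_X * (fps_X ^ k * fps_nth_deriv (k+1) fps_cosh_sqrt))
     - fps_const ((2 * real k + 3) / 2) * (fps_X ^ (k+1) * fps_nth_deriv (k+2) fps_cosh_sqrt)"
proof -
  have "fps_X ^ (k+2) * fps_nth_deriv (k+3) fps_cosh_sqrt
      = fps_X ^ (k+1) * (fps_X * fps_nth_deriv ((k+1) + 2) (fps_cosh_sqrt :: real fps))"
    by (simp add: mult.assoc numeral_3_eq_3)
  also have "\<dots> = fps_X ^ (k+1) * (fps_const (1/4) * fps_nth_deriv (k+1) fps_cosh_sqrt
     - fps_const ((2 * real (k+1) + 1) / 2) * fps_nth_deriv (k+2) fps_cosh_sqrt)"
    by (simp only: fps_cosh_sqrt_ode) (simp add: numeral_2_eq_2)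
  finally show ?thesis
    by (simp add: algebra_simps)
qed

lemma cosh_part_rec:
  "cosh_part (k+2) = fps_const (1/4) * (fps_X * cosh_part k) - fps_const ((2 * real k + 3) / 2) * cosh_part (k+1)"
proof (rule fps_ext)
  have start: "cosh_part_coeff (Suc j) 0 = 1/4 * cosh_part_coeff j 0" for j
    unfolding cosh_part_coeff_def by (simp add: divide_simps; (simp add: algebra_simps)?)
  have edge: "cosh_part_coeff 0 (Suc q) = - ((2 * real q + 3) / 2 * cosh_part_coeff 0 q)" for q
    unfolding cosh_part_coeff_def by (simp add: divide_simps; (simp add: algebra_simps)?)
  have inner: "cosh_part_coeff (Suc j) (Suc q) =
      1/4 * cosh_part_coeff j (Suc q) - (2 * real (2 * (j+1) + q) + 3) / 2 * cosh_part_coeff (Suc j) q" for j q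
    unfolding cosh_part_coeff_def by (simp add: divide_simps; (simp add: algebra_simps)?)
  fix j
  show "fps_nth (cosh_part (k+2)) j =
    fps_nth (fps_const (1/4) * (fps_X * cosh_part k) - fps_const ((2 * real k + 3) / 2) * cosh_part (k+1)) j"
  proof (cases "2*j < k + 2")
    case False then show ?thesis by (auto simp: cosh_part_def)
  next
    case True
    then have "2*j = k + 1 \<or> (\<exists>q. k = 2*j + q)"
      by presburger
    then show ?thesis
    proof (elim disjE exE)
      assume "2*j = k + 1"
      moreover from this obtain i where "j = Suc i"
        by (cases j) auto
      ultimately show ?thesis
        using start [of i] by (simp add: cosh_part_def)
    next
      fix q assume "k = 2*j + q"
      then show ?thesis
        using edge [of q] inner [of "j - 1" q] by (cases j) (simp_all add: cosh_part_def algebra_simps)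
    qed
  qed
qed

lemma nth_deriv_cosh_sqrt_decomp:
  "fps_X ^ k * fps_nth_deriv (k+1) fps_cosh_sqrt = cosh_part k * fps_cosh_sqrt + sinh_part k * fps_sinhc_sqrt"
proof (induction k rule: sinh_part.induct)
  case 1
  have "cosh_part 0 = 0" by (rule fps_ext) (simp add: cosh_part_def)
  then show ?case by (simp add: fps_nth_deriv_commute fps_deriv_cosh_sqrt)
next
  case 2
  have "fps_X * fps_nth_deriv 2 fps_cosh_sqrt
      = fps_const (1/4) * fps_cosh_sqrt - fps_const (1/4) * (fps_sinhc_sqrt :: real fps)"
    using fps_cosh_sqrt_ode [of 0]
    by (simp add: numeral_2_eq_2 fps_nth_deriv_commute fps_deriv_cosh_sqrt flip: mult.assoc)
  moreover have "cosh_part 1 = fps_const (1/4)"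
    by (rule fps_ext) (simp add: cosh_part_def cosh_part_coeff_def)
  ultimately show ?case
    by (simp add: algebra_simps numeral_2_eq_2 flip: fps_const_neg)
next
  case (3 k)
  let ?C = "fps_cosh_sqrt :: real fps" and ?S = "fps_sinhc_sqrt :: real fps"
  have "fps_X ^ (k+2) * fps_nth_deriv (k+3) ?C
      = fps_const (1/4) * (fps_X * (cosh_part k * ?C + sinh_part k * ?S))
        - fps_const ((2 * real k + 3) / 2) * (cosh_part (k+1) * ?C + sinh_part (k+1) * ?S)"
    unfolding nth_deriv_cosh_sqrt_rec using 3 by simp
  also have "\<dots> = cosh_part (k+2) * ?C + sinh_part (k+2) * ?S"
    unfolding cosh_part_rec by (simp add: algebra_simps)
  finally show ?case
    by (simp add: numeral_3_eq_3 numeral_2_eq_2)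
qed

lemma sinh_part_nth_above_degree: "k - 1 < j \<Longrightarrow> fps_nth (sinh_part k) j = 0"
proof (induction k arbitrary: j rule: sinh_part.induct)
  case (3 k)
  then show ?case by simp
qed simp_all

definition faulhaber_fps :: "nat \<Rightarrow> real fps" where
  "faulhaber_fps i = fps_nth_deriv i fps_cosh_sqrt / fps_sinhc_sqrt"

lemma faulhaber_fps_mult: "faulhaber_fps i * fps_sinhc_sqrt = fps_nth_deriv i fps_cosh_sqrt"
  by (simp add: faulhaber_fps_def fps_div_sinhc_sqrt_mult)

lemma faulhaber_fps_decomp:
  "fps_X ^ k * faulhaber_fps (k+1) = cosh_part k * fps_coth_sqrt + sinh_part k"
proof -
  have "fps_X ^ k * faulhaber_fps (k+1) * fps_sinhc_sqrt = fps_X ^ k * fps_nth_deriv (k+1) fps_cosh_sqrt"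
    by (simp only: mult.assoc faulhaber_fps_mult)
  also have "\<dots> = (cosh_part k * fps_coth_sqrt + sinh_part k) * fps_sinhc_sqrt"
    by (simp only: nth_deriv_cosh_sqrt_decomp fps_coth_sqrt_def distrib_right mult.assoc
        fps_div_sinhc_sqrt_mult)
  finally show ?thesis
    by (simp add: fps_sinhc_sqrt_nonzero)
qed

lemma faulhaber_fps_nth:
  assumes "1 \<le> k" "k \<le> n"
  shows "fps_nth (faulhaber_fps (k+1)) (n-k) =
    (\<Sum>j=0..(k-1) div 2. cosh_part_coeff j (k - 2*j - 1) * fps_nth fps_coth_sqrt (n-j))"
proof -
  have "fps_nth (faulhaber_fps (k+1)) (n-k) = fps_nth (fps_X ^ k * faulhaber_fps (k+1)) n"
    using assms by (simp add: fps_X_power_mult_nth)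
  also have "\<dots> = fps_nth (cosh_part k * fps_coth_sqrt) n + fps_nth (sinh_part k) n"
    by (simp only: faulhaber_fps_decomp fps_add_nth)
  also have "fps_nth (sinh_part k) n = 0"
    using assms by (intro sinh_part_nth_above_degree) simp
  also have "fps_nth (cosh_part k * fps_coth_sqrt) n
      = (\<Sum>j=0..n. fps_nth (cosh_part k) j * fps_nth fps_coth_sqrt (n-j))"
    by (simp add: fps_mult_nth)
  also have "\<dots> = (\<Sum>j=0..(k-1) div 2. fps_nth (cosh_part k) j * fps_nth fps_coth_sqrt (n-j))"
    using assms by (intro sum.mono_neutral_right) (auto simp: cosh_part_def)
  also have "\<dots> = (\<Sum>j=0..(k-1) div 2. cosh_part_coeff j (k - 2*j - 1) * fps_nth fps_coth_sqrt (n-j))"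
    using assms by (intro sum.cong refl) (auto simp: cosh_part_def)
  finally show ?thesis by simp
qed

section \<open>The generating function\<close>

lemma sums_even_iff:
  assumes "\<And>n. odd n \<Longrightarrow> f n = 0"
  shows "(\<lambda>n. f (2 * n)) sums s \<longleftrightarrow> f sums s"
proof (rule sums_mono_reindex)
  show "strict_mono (\<lambda>n::nat. 2 * n)"
    by (auto simp: strict_mono_def)
  show "f n = 0" if "n \<notin> range (\<lambda>n. 2 * n)" for n
    using that assms by (metis evenE rangeI)
qed

lemma powser_eq_0_imp_coeff_eq_0:
  fixes a :: "nat \<Rightarrow> 'a::{real_normed_field,banach}"
  assumes "r > 0" and "\<And>x. norm x < r \<Longrightarrow> (\<lambda>n. a n * x ^ n) sums 0"
  shows "a n = 0"
proof (induction n rule: less_induct)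
  case (less n)
  have shifted: "(\<lambda>i. a (i + n) * x ^ i) sums 0" if x: "x \<noteq> 0" "norm x < r" for x
  proof -
    have "(\<lambda>i. a (i + n) * x ^ (i + n)) sums 0"
      using sums_zero_iff_shift [of n "\<lambda>i. a i * x ^ i" 0] less assms(2) [OF x(2)] by simp
    then have "(\<lambda>i. a (i + n) * x ^ (i + n) * (1 / x ^ n)) sums (0 * (1 / x ^ n))"
      by (rule sums_mult2)
    then show ?thesis
      using x by (simp add: power_add)
  qed
  have "((\<lambda>x::'a. 0) \<longlongrightarrow> a (0 + n)) (at 0)"
    using powser_limit_0_strong [where a = "\<lambda>i. a (i + n)" and f = "\<lambda>x. 0", OF assms(1) shifted]
    by simp
  then show ?case
    using LIM_const_eq by fastforce
qed

lemma even_powser_eq_0_imp_coeff_eq_0: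
  fixes p :: "nat \<Rightarrow> real"
  assumes "r > 0" and "\<And>x. \<bar>x\<bar> < r \<Longrightarrow> (\<lambda>n. p n * x ^ (2*n)) sums 0"
  shows "p n = 0"
proof -
  define d where "d m = (if even m then p (m div 2) else 0)" for m
  have "(\<lambda>m. d m * x ^ m) sums 0" if "norm x < r" for x :: real
    using assms(2) [of x] that by (subst sums_even_iff [symmetric]) (simp_all add: d_def)
  then have "d (2*n) = 0"
    using assms(1) by (intro powser_eq_0_imp_coeff_eq_0 [where r = r])
  then show ?thesis
    by (simp add: d_def)
qed

lemma polyfun_eq_0_on_pos_imp_coeff_eq_0:
  fixes c :: "nat \<Rightarrow> real"
  assumes "\<And>y. y > 0 \<Longrightarrow> (\<Sum>i<n. c i * y ^ i) = 0" and "k < n"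
  shows "c k = 0"
proof (rule ccontr)
  assume "c k \<noteq> 0"
  define c' where "c' i = (if i < n then c i else 0)" for i
  have "(\<Sum>i\<le>n. c' i * y ^ i) = (\<Sum>i<n. c i * y ^ i)" for y :: real
    by (simp add: c'_def lessThan_Suc_atMost [symmetric])
  then have "{0<..} \<subseteq> {y. (\<Sum>i\<le>n. c' i * y ^ i) = 0}"
    using assms(1) by auto
  moreover have "finite {y. (\<Sum>i\<le>n. c' i * y ^ i) = (0::real)}"
    using assms(2) \<open>c k \<noteq> 0\<close> by (intro polyfun_rootbound_finite exI [of _ k]) (auto simp: c'_def)
  ultimately show False
    using infinite_Ioi finite_subset by blast
qed

definition faulhaber_gf_coeff :: "nat \<Rightarrow> real \<Rightarrow> real" where
  "faulhaber_gf_coeff N y = (\<Sum>K<N. fps_nth (faulhaber_fps (N - K)) K * (y/4) ^ K / fact (N - K))"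

definition faulhaber_coeff :: "nat \<Rightarrow> nat \<Rightarrow> real" where
  "faulhaber_coeff N K =
     (if K < N then fact (2*N) / (fact (N - K) * 4 ^ K) * fps_nth (faulhaber_fps (N - K)) K else 0)"

lemma faulhaber_coeff_sum:
  "(\<Sum>k<n. x ^ (2*n) / fact (2*n) * faulhaber_coeff n k * y ^ k) = faulhaber_gf_coeff n y * x ^ (2*n)"
  unfolding faulhaber_gf_coeff_def sum_distrib_right
  by (intro sum.cong refl) (simp add: faulhaber_coeff_def power_divide field_simps)

lemma sum_triangle_reindex:
  fixes h :: "nat \<Rightarrow> nat \<Rightarrow> 'a::comm_monoid_add"
  shows "(\<Sum>a\<le>N. \<Sum>K<a. h a K) = (\<Sum>i\<in>{1..N}. \<Sum>K\<le>N-i. h (K+i) K)"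
proof -
  have "(\<Sum>a\<le>N. \<Sum>K<a. h a K) = (\<Sum>(a,K)\<in>Sigma {..N} (\<lambda>a. {..<a}). h a K)"
    by (rule sum.Sigma) auto
  also have "\<dots> = (\<Sum>(i,K)\<in>Sigma {1..N} (\<lambda>i. {..N-i}). h (K+i) K)"
    by (rule sum.reindex_bij_witness [where i = "\<lambda>(i,K). (K+i,K)" and j = "\<lambda>(a,K). (a-K,K)"]) auto
  also have "\<dots> = (\<Sum>i\<in>{1..N}. \<Sum>K\<le>N-i. h (K+i) K)"
    by (rule sum.Sigma [symmetric]) auto
  finally show ?thesis .
qed

lemma nth_deriv_cosh_sqrt_taylor:
  "(\<Sum>i\<in>{1..N}. Y^(N-i) / fact i * fps_nth (fps_nth_deriv i fps_cosh_sqrt) (N-i)) =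
     ((Y+1)^N - Y^N) / (fact (2*N) :: real)"
proof -
  have terms: "(\<Sum>i\<in>{1..N}. Y^(N-i) / fact i * fps_nth (fps_nth_deriv i fps_cosh_sqrt) (N-i)) =
      (\<Sum>i\<in>{1..N}. of_nat (N choose i) * Y^(N-i) / fact (2*N))"
  proof (intro sum.cong refl)
    fix i assume i: "i \<in> {1..N}"
    then have "N - i + i = N" "2 * (N - i + i) = 2 * N"
      by auto
    then have "fps_nth (fps_nth_deriv i fps_cosh_sqrt) (N-i) = fact N / (fact (N-i) * (fact (2*N) :: real))"
      by (simp add: fps_nth_deriv_nth)
    moreover have "real (N choose i) = fact N / (fact i * fact (N-i))"
      using i by (simp add: binomial_fact)
    ultimately show "Y^(N-i) / fact i * fps_nth (fps_nth_deriv i fps_cosh_sqrt) (N-i) =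
        of_nat (N choose i) * Y^(N-i) / fact (2*N)"
      by (simp add: mult_ac)
  qed
  have binomial: "(Y+1)^N = Y^N + (\<Sum>i\<in>{1..N}. of_nat (N choose i) * Y^(N-i))"
  proof -
    have "(Y+1)^N = (\<Sum>i\<le>N. of_nat (N choose i) * 1^i * Y^(N-i))"
      by (subst add.commute) (rule binomial_ring)
    also have "\<dots> = Y^N + (\<Sum>i\<in>{1..N}. of_nat (N choose i) * Y^(N-i))"
      by (simp add: sum.atMost_shift atLeastAtMostSuc_conv sum.shift_bounds_cl_Suc_ivl
          atLeast0AtMost [symmetric] sum.atLeast_Suc_atMost)
    finally show ?thesis .
  qed
  show ?thesis
    unfolding terms binomial by (simp add: sum_divide_distrib)
qed

lemma faulhaber_gf_coeff_mult_sinhc: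
  "Abs_fps (\<lambda>N. faulhaber_gf_coeff N y) * (fps_sinhc_sqrt oo (fps_const (y/4) * fps_X)) =
     (fps_cosh_sqrt oo (fps_const (y/4 + 1) * fps_X)) - (fps_cosh_sqrt oo (fps_const (y/4) * fps_X))"
proof (rule fps_ext)
  fix N
  define Y where "Y = y/4"
  have "fps_nth (Abs_fps (\<lambda>N. faulhaber_gf_coeff N y) * (fps_sinhc_sqrt oo (fps_const Y * fps_X))) N
      = (\<Sum>a\<le>N. \<Sum>K<a. fps_nth (faulhaber_fps (a-K)) K * Y^K / fact (a-K) * (Y^(N-a) / fact (2*(N-a)+1)))"
    by (simp add: fps_mult_nth fps_compose_linear faulhaber_gf_coeff_def Y_def sum_distrib_right
        sum_divide_distrib atLeast0AtMost del: fact_Suc)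
  also have "\<dots> = (\<Sum>i\<in>{1..N}. \<Sum>K\<le>N-i.
      fps_nth (faulhaber_fps i) K * Y^K / fact i * (Y^(N-(K+i)) / fact (2*(N-(K+i))+1)))"
    by (simp add: sum_triangle_reindex del: fact_Suc)
  also have "\<dots> = (\<Sum>i\<in>{1..N}. Y^(N-i) / fact i *
      (\<Sum>K=0..N-i. fps_nth (faulhaber_fps i) K * fps_nth fps_sinhc_sqrt (N-i-K)))"
    unfolding sum_distrib_left
  proof (intro sum.cong refl)
    fix i K assume "i \<in> {1..N}" "K \<in> {0..N-i}"
    then have "K + (N - (K + i)) = N - i"
      by auto
    then have "Y^K * Y^(N-(K+i)) = Y^(N-i)"
      by (simp flip: power_add)
    moreover have "fps_nth fps_sinhc_sqrt (N-i-K) = 1 / fact (2*(N-(K+i))+1)"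
      by (simp add: add.commute del: fact_Suc)
    ultimately show "fps_nth (faulhaber_fps i) K * Y^K / fact i * (Y^(N-(K+i)) / fact (2*(N-(K+i))+1)) =
        Y^(N-i) / fact i * (fps_nth (faulhaber_fps i) K * fps_nth fps_sinhc_sqrt (N-i-K))"
      by (simp add: field_simps del: fact_Suc)
  qed (simp add: atLeast0AtMost)
  also have "\<dots> = (\<Sum>i\<in>{1..N}. Y^(N-i) / fact i * fps_nth (fps_nth_deriv i fps_cosh_sqrt) (N-i))"
    by (simp only: fps_mult_nth [symmetric] faulhaber_fps_mult)
  also have "\<dots> = ((Y+1)^N - Y^N) / fact (2*N)"
    by (rule nth_deriv_cosh_sqrt_taylor)
  also have "\<dots> = fps_nth ((fps_cosh_sqrt oo (fps_const (Y + 1) * fps_X)) - (fps_cosh_sqrt oo (fps_const Y * fps_X))) N"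
    by (simp add: fps_compose_linear diff_divide_distrib)
  finally show "fps_nth (Abs_fps (\<lambda>N. faulhaber_gf_coeff N y) * (fps_sinhc_sqrt oo (fps_const (y/4) * fps_X))) N =
      fps_nth ((fps_cosh_sqrt oo (fps_const (y/4 + 1) * fps_X)) - (fps_cosh_sqrt oo (fps_const (y/4) * fps_X))) N"
    by (simp add: Y_def)
qed

lemma cosh_has_fps_expansion:
  "(\<lambda>x::real. cosh (b * x)) has_fps_expansion (fps_cosh_sqrt oo (fps_const (b\<^sup>2) * fps_X ^ 2))"
proof -
  have "(\<lambda>x::real. 1/2 * (exp (b * x) + exp ((-b) * x)))
      has_fps_expansion fps_const (1/2) * (fps_exp b + fps_exp (-b))"
    by (intro fps_expansion_intros)
  moreover have "(\<lambda>x::real. 1/2 * (exp (b * x) + exp ((-b) * x))) = (\<lambda>x. cosh (b * x))"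
    by (simp add: fun_eq_iff cosh_def)
  moreover have "fps_const (1/2) * (fps_exp b + fps_exp (-b)) = fps_cosh_sqrt oo (fps_const (b\<^sup>2) * fps_X ^ 2)"
    by (intro fps_ext) (auto simp: fps_compose_monom_nth power_mult elim!: evenE)
  ultimately show ?thesis
    by simp
qed

lemma sinh_div_has_fps_expansion:
  fixes a :: real
  assumes "a \<noteq> 0"
  shows "(\<lambda>x. if x = 0 then 1 else sinh (a * x) / (a * x))
    has_fps_expansion (fps_sinhc_sqrt oo (fps_const (a\<^sup>2) * fps_X ^ 2))"
proof -
  define F where "F = fps_const (1 / (2*a)) * (fps_exp a - fps_exp (-a))"
  have F_1: "fps_nth F 1 = 1"
    using assms by (simp add: F_def)
  have "(\<lambda>x. 1 / (2*a) * (exp (a * x) - exp ((-a) * x))) has_fps_expansion F"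
    unfolding F_def by (intro fps_expansion_intros)
  moreover have "1 \<le> subdegree F"
    using F_1 by (intro subdegree_geI) (auto simp: F_def)
  ultimately have "(\<lambda>x. if x = 0 then 1 else 1 / (2*a) * (exp (a * x) - exp ((-a) * x)) / x ^ 1)
      has_fps_expansion fps_shift 1 F"
    using F_1 by (intro has_fps_expansion_shift) auto
  moreover have "(\<lambda>x. if x = 0 then 1 else 1 / (2*a) * (exp (a * x) - exp ((-a) * x)) / x ^ 1) =
      (\<lambda>x. if x = 0 then 1 else sinh (a * x) / (a * x))"
    using assms by (auto simp: fun_eq_iff sinh_def field_simps)
  moreover have "fps_shift 1 F = fps_sinhc_sqrt oo (fps_const (a\<^sup>2) * fps_X ^ 2)"
  proof (rule fps_ext)
    fix m
    show "fps_nth (fps_shift 1 F) m = fps_nth (fps_sinhc_sqrt oo (fps_const (a\<^sup>2) * fps_X ^ 2)) m"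
    proof (cases "even m")
      case True
      then obtain p where m: "m = 2 * p" ..
      have "fps_nth (fps_shift 1 F) m = (a ^ (2*p+1) - (-a) ^ (2*p+1)) / (2 * a * fact (2*p+1))"
        by (simp add: F_def m fps_exp_def diff_divide_distrib del: fact_Suc)
      also have "a ^ (2*p+1) - (-a) ^ (2*p+1) = 2 * a * (a\<^sup>2) ^ p"
        by (simp add: power_minus_odd power_mult)
      also have "2 * a * (a\<^sup>2) ^ p / (2 * a * fact (2*p+1)) = (a\<^sup>2) ^ p / fact (2*p+1)"
        using assms by (simp del: fact_Suc)
      finally show ?thesis
        by (simp add: fps_compose_monom_nth m del: fact_Suc)
    qed (simp add: F_def fps_compose_monom_nth)
  qed
  ultimately show ?thesis
    by simp
qed

lemma faulhaber_gf_has_fps_expansion: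
  assumes "y > 0"
  shows "faulhaber_gf y has_fps_expansion (Abs_fps (\<lambda>N. faulhaber_gf_coeff N y) oo fps_X ^ 2)"
proof -
  define a where "a = sqrt y / 2"
  define b where "b = sqrt (y + 4) / 2"
  have a: "a > 0" "a\<^sup>2 = y/4" and b: "b\<^sup>2 = y/4 + 1"
    using assms by (simp_all add: a_def b_def power_divide)
  have "faulhaber_gf y = (\<lambda>x. (cosh (b * x) - cosh (a * x)) / (if x = 0 then 1 else sinh (a * x) / (a * x)))"
  proof
    fix x
    have arg: "x * sqrt y / 2 = a * x" "x * sqrt (y + 4) / 2 = b * x"
      by (simp_all add: a_def b_def)
    show "faulhaber_gf y x = (cosh (b * x) - cosh (a * x)) / (if x = 0 then 1 else sinh (a * x) / (a * x))"
      unfolding faulhaber_gf_def arg using a(1) by (cases "x = 0") (simp_all add: field_simps)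
  qed
  moreover have "(\<lambda>x. (cosh (b * x) - cosh (a * x)) / (if x = 0 then 1 else sinh (a * x) / (a * x)))
      has_fps_expansion ((fps_cosh_sqrt oo (fps_const (y/4 + 1) * fps_X ^ 2))
        - (fps_cosh_sqrt oo (fps_const (y/4) * fps_X ^ 2))) / (fps_sinhc_sqrt oo (fps_const (y/4) * fps_X ^ 2))"
    using cosh_has_fps_expansion [of b] cosh_has_fps_expansion [of a] sinh_div_has_fps_expansion [of a] a b
    by (intro has_fps_expansion_divide' fps_expansion_intros) auto
  moreover have "(Abs_fps (\<lambda>N. faulhaber_gf_coeff N y) oo fps_X ^ 2) * (fps_sinhc_sqrt oo (fps_const (y/4) * fps_X ^ 2))
      = (fps_cosh_sqrt oo (fps_const (y/4 + 1) * fps_X ^ 2)) - (fps_cosh_sqrt oo (fps_const (y/4) * fps_X ^ 2))"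
    using faulhaber_gf_coeff_mult_sinhc [of y, THEN arg_cong [where f = "\<lambda>F. F oo fps_X ^ 2"]]
    by (simp add: fps_compose_mult_distrib fps_compose_sub_distrib fps_compose_linear_compose [of 2 _ _ 1, simplified])
  moreover have "fps_sinhc_sqrt oo (fps_const (y/4) * fps_X ^ 2) \<noteq> (0 :: real fps)"
    by (simp add: fps_compose_eq_0_iff fps_sinhc_sqrt_nonzero)
  ultimately show ?thesis
    by (metis nonzero_mult_div_cancel_right)
qed

lemma faulhaber_coeff_series_sums:
  assumes "y > 0"
  shows "\<exists>r>0. \<forall>x. \<bar>x\<bar> < r \<longrightarrow>
    (\<lambda>n. \<Sum>k<n. x ^ (2*n) / fact (2*n) * faulhaber_coeff n k * y ^ k) sums faulhaber_gf y x"
proof -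
  define F where "F = Abs_fps (\<lambda>N. faulhaber_gf_coeff N y) oo fps_X ^ 2"
  have radius: "fps_conv_radius F > 0" and eval: "eventually (\<lambda>x. eval_fps F x = faulhaber_gf y x) (nhds 0)"
    using faulhaber_gf_has_fps_expansion [OF assms] by (auto simp: F_def has_fps_expansion_def)
  have "eventually (\<lambda>x. x \<in> eball 0 (fps_conv_radius F)) (nhds (0::real))"
    using radius by (intro eventually_nhds_in_open) (auto simp: zero_ereal_def)
  with eval have "eventually (\<lambda>x. (\<lambda>m. fps_nth F m * x ^ m) sums faulhaber_gf y x) (nhds 0)"
  proof eventually_elim
    case (elim x)
    then have "norm x < fps_conv_radius F"
      by simp
    with elim(1) show ?case
      using sums_eval_fps by fastforce
  qed
  then obtain r where r: "r > 0" "\<And>x. dist x 0 < r \<Longrightarrow> (\<lambda>m. fps_nth F m * x ^ m) sums faulhaber_gf y x"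
    unfolding eventually_nhds_metric by blast
  have "(\<lambda>n. \<Sum>k<n. x ^ (2*n) / fact (2*n) * faulhaber_coeff n k * y ^ k) sums faulhaber_gf y x"
    if "\<bar>x\<bar> < r" for x
  proof -
    have "(\<lambda>m. fps_nth F m * x ^ m) sums faulhaber_gf y x"
      using r(2) that by simp
    then have "(\<lambda>n. fps_nth F (2*n) * x ^ (2*n)) sums faulhaber_gf y x"
      by (subst sums_even_iff) (simp_all add: F_def fps_compose_X2_nth)
    then have "(\<lambda>n. faulhaber_gf_coeff n y * x ^ (2*n)) sums faulhaber_gf y x"
      by (simp add: F_def fps_compose_X2_nth)
    then show ?thesis
      by (simp only: faulhaber_coeff_sum)
  qed
  with r(1) show ?thesis
    by blast
qed

lemma double_series_eq_0_imp_coeff_eq_0: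
  fixes e :: "nat \<Rightarrow> nat \<Rightarrow> real"
  assumes "\<And>y. y > 0 \<Longrightarrow> \<exists>r>0. \<forall>x. \<bar>x\<bar> < r \<longrightarrow>
      (\<lambda>n. \<Sum>k<n. x ^ (2*n) / fact (2*n) * e n k * y ^ k) sums 0"
    and "k < n"
  shows "e n k = 0"
proof (rule polyfun_eq_0_on_pos_imp_coeff_eq_0 [OF _ \<open>k < n\<close>])
  fix y :: real
  assume "y > 0"
  then obtain r where "r > 0" and r: "\<And>x. \<bar>x\<bar> < r \<Longrightarrow>
      (\<lambda>n. \<Sum>k<n. x ^ (2*n) / fact (2*n) * e n k * y ^ k) sums 0"
    using assms(1) by blast
  have "(\<Sum>k<n. x ^ (2*n) / fact (2*n) * e n k * y ^ k) = (\<Sum>i<n. e n i * y ^ i) / fact (2*n) * x ^ (2*n)"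
    for x n
    by (simp add: sum_distrib_left sum_divide_distrib sum_distrib_right mult_ac)
  then have "(\<Sum>i<n. e n i * y ^ i) / fact (2*n) = 0"
    using r by (intro even_powser_eq_0_imp_coeff_eq_0 [OF \<open>r > 0\<close>]) simp
  then show "(\<Sum>i<n. e n i * y ^ i) = 0"
    by simp
qed

lemma faulhaber_coeff_unique:
  fixes c :: "nat \<Rightarrow> nat \<Rightarrow> real"
  assumes "\<forall>n k. n \<le> k \<longrightarrow> c n k = 0"
    and "\<forall>y>0. \<exists>r>0. \<forall>x. \<bar>x\<bar> < r \<longrightarrow>
      (\<lambda>n. \<Sum>k<n. x ^ (2*n) / fact (2*n) * c n k * y ^ k) sums faulhaber_gf y x"
  shows "c = faulhaber_coeff"
proof (intro ext)
  fix n k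
  have "c n k - faulhaber_coeff n k = 0" if "k < n"
  proof (rule double_series_eq_0_imp_coeff_eq_0 [OF _ that])
    fix y :: real
    assume "y > 0"
    obtain r1 where r1: "r1 > 0" "\<And>x. \<bar>x\<bar> < r1 \<Longrightarrow>
        (\<lambda>n. \<Sum>k<n. x ^ (2*n) / fact (2*n) * c n k * y ^ k) sums faulhaber_gf y x"
      using assms(2) \<open>y > 0\<close> by blast
    obtain r2 where r2: "r2 > 0" "\<And>x. \<bar>x\<bar> < r2 \<Longrightarrow>
        (\<lambda>n. \<Sum>k<n. x ^ (2*n) / fact (2*n) * faulhaber_coeff n k * y ^ k) sums faulhaber_gf y x"
      using faulhaber_coeff_series_sums [OF \<open>y > 0\<close>] by blast
    have "(\<lambda>n. \<Sum>k<n. x ^ (2*n) / fact (2*n) * (c n k - faulhaber_coeff n k) * y ^ k) sums 0"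
      if "\<bar>x\<bar> < min r1 r2" for x
    proof -
      have "(\<lambda>n. (\<Sum>k<n. x ^ (2*n) / fact (2*n) * c n k * y ^ k)
          - (\<Sum>k<n. x ^ (2*n) / fact (2*n) * faulhaber_coeff n k * y ^ k))
          sums (faulhaber_gf y x - faulhaber_gf y x)"
        using that by (intro sums_diff r1(2) r2(2)) auto
      moreover have "(\<Sum>k<n. x ^ (2*n) / fact (2*n) * c n k * y ^ k)
          - (\<Sum>k<n. x ^ (2*n) / fact (2*n) * faulhaber_coeff n k * y ^ k)
          = (\<Sum>k<n. x ^ (2*n) / fact (2*n) * (c n k - faulhaber_coeff n k) * y ^ k)" for n
        by (simp only: sum_subtractf [symmetric]) (intro sum.cong refl, simp add: algebra_simps diff_divide_distrib)
      ultimately show ?thesis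
        by simp
    qed
    then show "\<exists>r>0. \<forall>x. \<bar>x\<bar> < r \<longrightarrow>
        (\<lambda>n. \<Sum>k<n. x ^ (2*n) / fact (2*n) * (c n k - faulhaber_coeff n k) * y ^ k) sums 0"
      using r1(1) r2(1) by (intro exI [of _ "min r1 r2"]) auto
  qed
  then show "c n k = faulhaber_coeff n k"
    using assms(1) by (cases "k < n") (auto simp: faulhaber_coeff_def)
qed

lemma faulhaber_A_eq: "faulhaber_A = faulhaber_coeff"
  unfolding faulhaber_A_def
proof (rule the_equality, goal_cases)
  case 1
  show ?case
    using faulhaber_coeff_series_sums by (auto simp: faulhaber_coeff_def)
next
  case (2 c)
  then show ?case
    using faulhaber_coeff_unique by blast
qed

lemma faulhaber_A_eq_sum:
  assumes "1 \<le> k" and "k \<le> n"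
  shows "faulhaber_A (n + 1) (n - k) = (\<Sum>j=0..(k-1) div 2.
    fact (2*n + 2) / (fact (k + 1) * 4 ^ (n - k)) * (cosh_part_coeff j (k - 2*j - 1) * fps_nth fps_coth_sqrt (n - j)))"
proof -
  have "n + 1 - (n - k) = k + 1"
    using assms by simp
  then have "faulhaber_A (n + 1) (n - k) =
      fact (2*n + 2) / (fact (k + 1) * 4 ^ (n - k)) * fps_nth (faulhaber_fps (k + 1)) (n - k)"
    using assms by (simp add: faulhaber_A_eq faulhaber_coeff_def del: fact_Suc)
  also have "\<dots> = (\<Sum>j=0..(k-1) div 2. fact (2*n + 2) / (fact (k + 1) * 4 ^ (n - k)) *
      (cosh_part_coeff j (k - 2*j - 1) * fps_nth fps_coth_sqrt (n - j)))"
    unfolding faulhaber_fps_nth [OF assms] sum_distrib_left ..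
  finally show ?thesis .
qed

section \<open>The cotangent series and zeta values\<close>

lemma Gamma_reflection_product_has_derivative:
  fixes z :: complex
  assumes "z \<notin> \<int>\<^sub>\<le>\<^sub>0" and "1 - z \<notin> \<int>\<^sub>\<le>\<^sub>0"
  shows "((\<lambda>w. Gamma w * Gamma (1 - w) * sin (of_real pi * w)) has_field_derivative Gamma z * Gamma (1 - z) *
      ((Digamma z - Digamma (1 - z)) * sin (of_real pi * z) + of_real pi * cos (of_real pi * z))) (at z)"
proof -
  have "((\<lambda>w. Gamma (1 - w)) has_field_derivative Gamma (1 - z) * Digamma (1 - z) * (-1)) (at z)"
    by (rule DERIV_chain2 [where f = Gamma and g = "\<lambda>w. 1 - w", OF has_field_derivative_Gamma [OF assms(2)]])
       (auto intro!: derivative_eq_intros)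
  moreover have "((\<lambda>w. sin (of_real pi * w)) has_field_derivative cos (of_real pi * z) * of_real pi) (at z)"
    by (rule DERIV_chain2 [where f = sin and g = "\<lambda>w. of_real pi * w", OF DERIV_sin])
       (auto intro!: derivative_eq_intros)
  ultimately show ?thesis
    by (rule DERIV_cong [OF DERIV_mult [OF DERIV_mult [OF has_field_derivative_Gamma [OF assms(1)]]]])
       (simp add: algebra_simps)
qed

lemma Digamma_reflection_complex:
  fixes z :: complex
  assumes "z \<notin> \<int>"
  shows "of_real pi * cos (of_real pi * z) = (Digamma (1 - z) - Digamma z) * sin (of_real pi * z)"
proof -
  have "1 - z \<notin> \<int>"
    using assms Ints_diff [of 1 "1 - z"] by auto
  then have z: "z \<notin> \<int>\<^sub>\<le>\<^sub>0" "1 - z \<notin> \<int>\<^sub>\<le>\<^sub>0"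
    using assms nonpos_Ints_subset_Ints by blast+
  define g where "g w = Gamma w * Gamma (1 - w) * sin (of_real pi * w)" for w :: complex
  have "(g has_field_derivative Gamma z * Gamma (1 - z) *
      ((Digamma z - Digamma (1 - z)) * sin (of_real pi * z) + of_real pi * cos (of_real pi * z))) (at z)"
    unfolding g_def using z by (rule Gamma_reflection_product_has_derivative)
  moreover have "(g has_field_derivative 0) (at z)"
  proof -
    have "eventually (\<lambda>w. w \<in> - \<int>) (nhds z)"
      using assms by (intro eventually_nhds_in_open) auto
    then have const: "eventually (\<lambda>w. g w = of_real pi) (nhds z)"
    proof eventually_elim
      case (elim w)
      then have "sin (of_real pi * w) \<noteq> 0"
        by (subst sin_eq_0) auto
      then show ?case
        by (simp add: g_def Gamma_reflection_complex)
    qed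
    then show ?thesis
      using DERIV_cong_ev [OF refl const refl] DERIV_const [of "of_real pi" "at z"] by simp
  qed
  ultimately have "Gamma z * Gamma (1 - z) *
      ((Digamma z - Digamma (1 - z)) * sin (of_real pi * z) + of_real pi * cos (of_real pi * z)) = 0"
    using DERIV_unique by blast
  moreover have "Gamma z * Gamma (1 - z) \<noteq> 0"
    using z by (auto simp: Gamma_eq_zero_iff)
  ultimately have "of_real pi * cos (of_real pi * z) = - ((Digamma z - Digamma (1 - z)) * sin (of_real pi * z))"
    by (simp add: eq_neg_iff_add_eq_0 add.commute)
  then show ?thesis
    by (simp add: algebra_simps)
qed

lemma pi_cot_Digamma:
  fixes z :: complex
  assumes "norm z < 1"
  shows "(1 - z * (Digamma (1 + z) - Digamma (1 - z))) * sin (of_real pi * z) = of_real pi * (z * cos (of_real pi * z))"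
proof (cases "z = 0")
  case False
  have "z \<notin> \<int>"
  proof
    assume "z \<in> \<int>"
    then obtain n where n: "z = of_int n"
      by (auto elim!: Ints_cases)
    with assms have "\<bar>real_of_int n\<bar> < 1"
      by (metis norm_of_int)
    then have "n = 0"
      by linarith
    with n False show False
      by simp
  qed
  have "Digamma (1 + z) = Digamma z + 1 / z"
    using Digamma_plus1 [OF False] by (simp add: add.commute)
  then have "(1 - z * (Digamma (1 + z) - Digamma (1 - z))) * sin (of_real pi * z)
      = z * ((Digamma (1 - z) - Digamma z) * sin (of_real pi * z))"
    using False by (simp add: field_simps)
  also have "\<dots> = of_real pi * (z * cos (of_real pi * z))"
    by (simp add: Digamma_reflection_complex [OF \<open>z \<notin> \<int>\<close>, symmetric])
  finally show ?thesis .
qed simp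

lemma ball_1_1_Int_nonpos_Ints: "ball (1::complex) 1 \<inter> \<int>\<^sub>\<le>\<^sub>0 = {}"
proof (intro equals0I)
  fix w :: complex
  assume "w \<in> ball 1 1 \<inter> \<int>\<^sub>\<le>\<^sub>0"
  then obtain n where n: "w = of_int n" "n \<le> 0" and "dist 1 w < 1"
    by (auto elim!: nonpos_Ints_cases)
  then have "norm (1 - of_int n :: complex) < 1"
    by (simp add: dist_norm)
  also have "norm (1 - of_int n :: complex) = \<bar>1 - real_of_int n\<bar>"
    by (metis norm_of_int of_int_1 of_int_diff)
  finally show False
    using n by simp
qed

lemma Digamma_linear_has_fps_expansion:
  fixes u :: complex
  assumes "norm u = 1"
  shows "(\<lambda>w. Digamma (u * w + 1)) has_fps_expansion Abs_fps (\<lambda>n. u ^ n * Polygamma n 1 / fact n)"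
proof -
  have Polygamma_holo: "Polygamma 0 holomorphic_on ball (1::complex) 1"
    by (intro holomorphic_on_Polygamma ball_1_1_Int_nonpos_Ints)
  have maps: "u * w + 1 \<in> ball 1 1" if "w \<in> ball 0 1" for w
    using that assms by (simp add: dist_norm norm_mult)
  have "(Polygamma 0 \<circ> (\<lambda>w. u * w + 1)) holomorphic_on ball 0 1"
    using maps by (intro holomorphic_on_compose_gen [OF _ Polygamma_holo] holomorphic_intros) auto
  then have "(\<lambda>w. Digamma (u * w + 1)) holomorphic_on ball 0 1"
    by (simp add: o_def)
  then have "(\<lambda>w. Digamma (u * w + 1)) has_fps_expansion fps_expansion (\<lambda>w. Digamma (u * w + 1)) 0"
    by (intro has_fps_expansion_fps_expansion [OF open_ball]) auto
  moreover have "(deriv ^^ n) (\<lambda>w. Digamma (u * w + 1)) 0 = u ^ n * Polygamma n 1" for n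
  proof -
    have "(deriv ^^ n) (\<lambda>w. Polygamma 0 (u * w + 1)) 0 = u ^ n * (deriv ^^ n) (Polygamma 0) (u * 0 + 1)"
      using maps by (intro higher_deriv_compose_linear' [where S = "ball 0 1", OF Polygamma_holo open_ball open_ball])
        auto
    then show ?thesis
      using higher_deriv_Polygamma [of "1::complex" n 0] by simp
  qed
  ultimately show ?thesis
    by (simp add: fps_expansion_def)
qed

(* Taylor series of pi z cot (pi z) = 1 - z (psi (1 + z) - psi (1 - z)) at 0 *)
definition pi_cot_fps :: "complex fps" where
  "pi_cot_fps = 1 - fps_X * (Abs_fps (\<lambda>n. Polygamma n 1 / fact n) - Abs_fps (\<lambda>n. (-1) ^ n * Polygamma n 1 / fact n))"

lemma pi_cot_fps_nth_Suc: "fps_nth pi_cot_fps (Suc m) = - ((1 - (-1) ^ m) * Polygamma m 1 / fact m)"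
  by (simp add: pi_cot_fps_def algebra_simps diff_divide_distrib)

lemma pi_cot_fps_mult_sin: "pi_cot_fps * fps_sin (of_real pi) = fps_const (of_real pi) * (fps_X * fps_cos (of_real pi))"
proof -
  have "(\<lambda>z. 1 - z * (Digamma (1 * z + 1) - Digamma ((-1) * z + 1))) has_fps_expansion pi_cot_fps"
    unfolding pi_cot_fps_def
    using Digamma_linear_has_fps_expansion [of 1] Digamma_linear_has_fps_expansion [of "-1"]
    by (intro fps_expansion_intros) auto
  then have expansion: "(\<lambda>z. (1 - z * (Digamma (1 + z) - Digamma (1 - z))) * sin (of_real pi * z))
      has_fps_expansion pi_cot_fps * fps_sin (of_real pi)"
    by (intro fps_expansion_intros) (simp add: add.commute)
  have ev: "eventually (\<lambda>z::complex. (1 - z * (Digamma (1 + z) - Digamma (1 - z))) * sin (of_real pi * z)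
      = of_real pi * (z * cos (of_real pi * z))) (nhds 0)"
  proof -
    have "eventually (\<lambda>z::complex. z \<in> ball 0 1) (nhds 0)"
      by (intro eventually_nhds_in_open) auto
    then show ?thesis
      by eventually_elim (simp add: pi_cot_Digamma)
  qed
  then have "(\<lambda>z. of_real pi * (z * cos (of_real pi * z))) has_fps_expansion pi_cot_fps * fps_sin (of_real pi)"
    using has_fps_expansion_cong [OF ev refl] expansion by blast
  moreover have "(\<lambda>z::complex. of_real pi * (z * cos (of_real pi * z)))
      has_fps_expansion fps_const (of_real pi) * (fps_X * fps_cos (of_real pi))"
    by (intro fps_expansion_intros has_fps_expansion_cos)
  ultimately show ?thesis
    using fps_expansion_unique_complex by blast
qed

lemma pi_cot_fps_even: "pi_cot_fps = Abs_fps (\<lambda>r. fps_nth pi_cot_fps (2*r)) oo fps_X ^ 2"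
proof (rule fps_ext)
  fix m
  show "fps_nth pi_cot_fps m = fps_nth (Abs_fps (\<lambda>r. fps_nth pi_cot_fps (2*r)) oo fps_X ^ 2) m"
  proof (cases "even m")
    case False
    then obtain q where "m = Suc (2*q)"
      by (auto elim: oddE)
    then show ?thesis
      using pi_cot_fps_nth_Suc [of "2*q"] by (simp add: fps_compose_X2_nth)
  qed (simp add: fps_compose_X2_nth)
qed

lemma fps_coth_sqrt_complex_eq:
  "(fps_coth_sqrt :: complex fps) =
     Abs_fps (\<lambda>r. fps_nth pi_cot_fps (2*r)) oo (fps_const (- 1 / of_real pi ^ 2) * fps_X)"
proof -
  define H where "H = Abs_fps (\<lambda>r. fps_nth pi_cot_fps (2*r))"
  define c where "c = (of_real pi :: complex)"
  have c: "c \<noteq> 0"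
    by (simp add: c_def)
  have "(fps_const c * fps_X) * ((H oo fps_X ^ 2) * (fps_sinhc_sqrt oo (fps_const (- c\<^sup>2) * fps_X ^ 2)))
      = (fps_const c * fps_X) * (fps_cosh_sqrt oo (fps_const (- c\<^sup>2) * fps_X ^ 2))"
    using pi_cot_fps_mult_sin
    unfolding fps_sin_eq_sinhc_sqrt fps_cos_eq_cosh_sqrt pi_cot_fps_even [folded H_def] c_def
    by (simp add: algebra_simps)
  then have "(H oo fps_X ^ 2) * (fps_sinhc_sqrt oo (fps_const (- c\<^sup>2) * fps_X ^ 2))
      = fps_cosh_sqrt oo (fps_const (- c\<^sup>2) * fps_X ^ 2)"
    using c by simp
  then have "(H * (fps_sinhc_sqrt oo (fps_const (- c\<^sup>2) * fps_X)) - (fps_cosh_sqrt oo (fps_const (- c\<^sup>2) * fps_X)))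
      oo fps_X ^ 2 = 0"
    by (simp add: fps_compose_sub_distrib fps_compose_mult_distrib fps_compose_linear_compose [of 2 _ _ 1, simplified])
  then have "H * (fps_sinhc_sqrt oo (fps_const (- c\<^sup>2) * fps_X)) = fps_cosh_sqrt oo (fps_const (- c\<^sup>2) * fps_X)"
    by (simp add: fps_compose_eq_0_iff)
  then have "(H * (fps_sinhc_sqrt oo (fps_const (- c\<^sup>2) * fps_X))) oo (fps_const (- 1 / c\<^sup>2) * fps_X)
      = (fps_cosh_sqrt oo (fps_const (- c\<^sup>2) * fps_X)) oo (fps_const (- 1 / c\<^sup>2) * fps_X)"
    by (rule arg_cong)
  then have "(H oo (fps_const (- 1 / c\<^sup>2) * fps_X)) * fps_sinhc_sqrt = fps_cosh_sqrt"
    using c by (simp add: fps_compose_mult_distrib fps_compose_linear_compose [of 1, simplified])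
  then show ?thesis
    unfolding H_def c_def by (rule fps_coth_sqrt_unique [symmetric])
qed

lemma of_real_fps_coth_sqrt_nth:
  "complex_of_real (fps_nth fps_coth_sqrt n) = fps_nth (fps_coth_sqrt :: complex fps) n"
proof -
  have "Abs_fps (\<lambda>n. complex_of_real (fps_nth fps_coth_sqrt n)) * fps_sinhc_sqrt = fps_cosh_sqrt"
  proof (rule fps_ext)
    fix m
    have "fps_nth (Abs_fps (\<lambda>n. complex_of_real (fps_nth fps_coth_sqrt n)) * fps_sinhc_sqrt) m
        = complex_of_real (fps_nth (fps_coth_sqrt * fps_sinhc_sqrt) m)"
      by (simp add: fps_mult_nth del: fact_Suc)
    then show "fps_nth (Abs_fps (\<lambda>n. complex_of_real (fps_nth fps_coth_sqrt n)) * fps_sinhc_sqrt) m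
        = fps_nth fps_cosh_sqrt m"
      by (simp add: fps_coth_sqrt_def fps_div_sinhc_sqrt_mult)
  qed
  then have "Abs_fps (\<lambda>n. complex_of_real (fps_nth fps_coth_sqrt n)) = fps_coth_sqrt"
    by (rule fps_coth_sqrt_unique)
  then show ?thesis
    by (metis fps_nth_Abs_fps)
qed

lemma zeta_real_Suc_eq_Polygamma:
  assumes "m > 0"
  shows "zeta_real (Suc m) = (-1) ^ Suc m * Polygamma m 1 / fact m"
proof -
  have "(\<lambda>k. inverse ((1 + real k) ^ Suc m)) sums ((-1) ^ Suc m * Polygamma m 1 / fact m)"
    using Polygamma_LIMSEQ [of "1::real" m] assms by simp
  moreover have "(\<lambda>k. inverse ((1 + real k) ^ Suc m)) = (\<lambda>k. 1 / real (Suc k) powr real (Suc m))"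
    by (intro ext) (subst powr_realpow, auto simp: inverse_eq_divide)
  ultimately show ?thesis
    unfolding zeta_real_def by (simp add: sums_iff)
qed

lemma fps_coth_sqrt_nth_Suc:
  "fps_nth (fps_coth_sqrt :: real fps) (Suc q) = 2 * (-1) ^ q * zeta_real (real (2*q + 2)) / pi ^ (2*q + 2)"
proof -
  define Z where "Z = zeta_real (real (2*q + 2))"
  have "Polygamma (2*q + 1) (1::complex) = of_real (fact (2*q + 1) * Z)"
    using Polygamma_of_real [of 1 "2*q + 1"] zeta_real_Suc_eq_Polygamma [of "2*q + 1"]
    by (simp add: Z_def del: fact_Suc)
  then have "fps_nth pi_cot_fps (2 * Suc q) = - 2 * of_real Z"
    using pi_cot_fps_nth_Suc [of "2*q + 1"] by (simp del: fact_Suc)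
  then have "complex_of_real (fps_nth fps_coth_sqrt (Suc q)) = (- 1 / of_real pi ^ 2) ^ Suc q * (- 2 * of_real Z)"
    by (simp add: of_real_fps_coth_sqrt_nth fps_coth_sqrt_complex_eq fps_compose_linear)
  also have "(- 1 / of_real pi ^ 2) ^ Suc q = (-1) ^ Suc q / (of_real pi :: complex) ^ (2 * Suc q)"
    by (simp only: power_divide power_mult)
  also have "(-1) ^ Suc q / of_real pi ^ (2 * Suc q) * (- 2 * of_real Z) =
      complex_of_real (2 * (-1) ^ q * Z / pi ^ (2*q + 2))"
    by simp
  finally show ?thesis
    unfolding Z_def of_real_eq_iff .
qed

lemma two_pi_power_even: "(2 * pi) ^ (2 * m + 2) = 4 * 4 ^ m * pi ^ (2 * m + 2)"
proof -
  have "(2 * pi) ^ (2 * m + 2) = ((2 * pi)\<^sup>2) ^ (m + 1)"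
    by (simp only: power_mult [symmetric]) simp
  also have "\<dots> = 4 ^ (m + 1) * (pi\<^sup>2) ^ (m + 1)"
    by (simp add: power_mult_distrib)
  also have "(pi\<^sup>2) ^ (m + 1) = pi ^ (2 * m + 2)"
    by (simp only: power_mult [symmetric]) simp
  finally show ?thesis
    by simp
qed

lemma faulhaber_term_eq:
  assumes "2*j + 1 \<le> k" and "k \<le> n"
  shows "fact (2*n + 2) / (fact (k + 1) * 4 ^ (n - k)) *
      (cosh_part_coeff j (k - 2*j - 1) * fps_nth fps_coth_sqrt (n - j)) =
    2 * (-1) ^ (n - k) * Gamma (real (2*n + 3)) / Gamma (real (k + 2)) *
      ((-1) ^ j * Gamma (real (2*k - 2*j)) / (Gamma (real (k - 2*j)) * Gamma (real (2*j + 2))) *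
       zeta_real (real (2*n - 2*j)) / (2 * pi) ^ (2*n - 2*j))"
proof -
  obtain a b where a: "k = 2*j + 1 + a" and b: "n = k + b"
    using assms le_Suc_ex by blast
  have Gamma_nat: "Gamma (real (Suc m)) = fact m" for m
    using Gamma_fact [of m] by (simp add: add.commute)
  have shifts: "2*n + 3 = Suc (2*n + 2)" "k + 2 = Suc (k + 1)" "2*k - 2*j = Suc (2*j + 2*a + 1)"
      "k - 2*j = Suc a" "2*j + 2 = Suc (2*j + 1)"
    using a by auto
  have Gammas: "Gamma (real (2*n + 3)) = fact (2*n + 2)" "Gamma (real (k + 2)) = fact (k + 1)"
      "Gamma (real (2*k - 2*j)) = fact (2*j + 2*a + 1)" "Gamma (real (k - 2*j)) = fact a"
      "Gamma (real (2*j + 2)) = fact (2*j + 1)"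
    by (simp_all only: shifts Gamma_nat)
  have signs: "(-1::real) ^ (j + a + b) * (-1) ^ a = (-1) ^ j * (-1) ^ b"
    by (simp add: power_add algebra_simps flip: power_mult_distrib)
  have pi_power: "(2 * pi) ^ (2*(j + a + b) + 2) = 4 ^ b * 4 ^ (j + a + 1) * pi ^ (2*(j + a + b) + 2)"
    using two_pi_power_even [of "j + a + b"] by (simp add: power_add mult_ac)
  have indices: "n - j = Suc (j + a + b)" "2*n - 2*j = 2*(j + a + b) + 2" "n - k = b" "k - 2*j - 1 = a"
    using a b by simp_all
  show ?thesis
    unfolding Gammas indices fps_coth_sqrt_nth_Suc cosh_part_coeff_def pi_power
    using a b signs by (simp add: field_simps del: fact_Suc)
qed

theorem mainTheorem2:
  fixes n k :: nat
  assumes "1 \<le> k" and "k \<le> n"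
  shows "faulhaber_A (n + 1) (n - k) =
    2 * (-1) ^ (n - k) * Gamma (real (2*n + 3)) / Gamma (real (k + 2)) *
    (\<Sum>j = 0..(k - 1) div 2.
       (-1) ^ j * Gamma (real (2*k - 2*j)) / (Gamma (real (k - 2*j)) * Gamma (real (2*j + 2))) *
       zeta_real (real (2*n - 2*j)) / (2 * pi) ^ (2*n - 2*j))"
proof -
  have "faulhaber_A (n + 1) (n - k) = (\<Sum>j=0..(k-1) div 2.
      fact (2*n + 2) / (fact (k + 1) * 4 ^ (n - k)) * (cosh_part_coeff j (k - 2*j - 1) * fps_nth fps_coth_sqrt (n - j)))"
    by (rule faulhaber_A_eq_sum [OF assms])
  also have "\<dots> = (\<Sum>j=0..(k-1) div 2. 2 * (-1) ^ (n - k) * Gamma (real (2*n + 3)) / Gamma (real (k + 2)) *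
      ((-1) ^ j * Gamma (real (2*k - 2*j)) / (Gamma (real (k - 2*j)) * Gamma (real (2*j + 2))) *
       zeta_real (real (2*n - 2*j)) / (2 * pi) ^ (2*n - 2*j)))"
    using assms by (intro sum.cong refl faulhaber_term_eq) auto
  finally show ?thesis
    by (simp only: sum_distrib_left)
qed

end
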